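(* Let $1\le p<2$, $N\in\mathbb N$, $d,n\ge1$, let $f=(f_1,\dots,f_d)$ be vector fields on $\mathbb R^n$ of class $C^1_b$, let $\mathbf w=(\mathbf w_0,\dots,\mathbf w_N)$ be a time series in $\mathbb R^d$, and let $\mathbf x$ solve $\mathbf x_{k+1}=\mathbf x_k+\sum_{\mu=1}^df_\mu(\mathbf x_k)(\mathbf w^\mu_{k+1}-\mathbf w^\mu_k)$, $\mathbf x_0=\xi\in\mathbb R^n$. Then for all $0\le k<l\le N$, \[ \|\mathbf x\|_{p;[k,l]}\le 2\Big(2^pC_{p,N}^{p-1}\|f\|^p_{C^1_b}\|\mathbf w\|^p_{p;[k,l]}\ \vee\ 2\|f\|_{C^1_b}\|\mathbf w\|_{p;[k,l]}\Big), \] where $C_{p,N}\coloneqq 2^{2/p}\zeta_N(2/p)$ and $\zeta_N(s)=\sum_{j=1}^Nj^{-s}$.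
   Context: $\mathbb R^n$ carries a fixed norm, $\mathbb R^d$ the $\ell^1$ norm; derivatives use operator norms. $\|f\|_{C^1_b}\coloneqq\max_\mu\max(\|f_\mu\|_\infty,\|Df_\mu\|_\infty)$. For $0\le k<l\le N$, $\mathcal S_{k,l}$ is the set of increasing integer sequences $s=(s_0=k<s_1<\dots<s_m<s_{m+1}=l)$, $\#s=m$, and $\|\mathbf w\|_{p;[k,l]}\coloneqq(\max_{s\in\mathcal S_{k,l}}\sum_{j=0}^{\#s}|\mathbf w_{s_{j+1}}-\mathbf w_{s_j}|^p)^{1/p}$; $a\vee b=\max(a,b)$. *)

theory Defs
  imports "HOL-Analysis.Analysis"
begin

fun consec_sum :: "(nat \<Rightarrow> nat \<Rightarrow> real) \<Rightarrow> nat list \<Rightarrow> real" where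
  "consec_sum g (a # b # rest) = g a b + consec_sum g (b # rest)"
| "consec_sum g _ = 0"

text \<open>The set S_{k,l}: a partition is given by its set of interior points P \<subseteq> {k<..<l};
  the full sequence is k < s_1 < ... < s_m < l.\<close>
definition partition_points :: "nat \<Rightarrow> nat \<Rightarrow> nat set \<Rightarrow> nat list" where
  "partition_points k l P = sorted_list_of_set (insert k (insert l P))"

text \<open>p-variation of a discrete path w.r.t. the distance function dst (dst a b = |w_b - w_a|).\<close>
definition pvar :: "real \<Rightarrow> (nat \<Rightarrow> nat \<Rightarrow> real) \<Rightarrow> nat \<Rightarrow> nat \<Rightarrow> real" where
  "pvar p dst k l =
     (Max ((\<lambda>P. consec_sum (\<lambda>a b. dst a b powr p) (partition_points k l P)) ` Pow {k<..<l}))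
       powr (1 / p)"

text \<open>l^1 distance on R^d, vectors represented as nat \<Rightarrow> real with coordinates 1..d.\<close>
definition l1_dist :: "nat \<Rightarrow> (nat \<Rightarrow> real) \<Rightarrow> (nat \<Rightarrow> real) \<Rightarrow> real" where
  "l1_dist d u v = (\<Sum>\<mu>=1..d. \<bar>v \<mu> - u \<mu>\<bar>)"

definition C1b_fields :: "nat \<Rightarrow> (nat \<Rightarrow> 'a::real_normed_vector \<Rightarrow> 'a) \<Rightarrow> bool" where
  "C1b_fields d f \<longleftrightarrow> (\<forall>\<mu>\<in>{1..d}. \<exists>D :: 'a \<Rightarrow> 'a \<Rightarrow>\<^sub>L 'a.
      (\<forall>x. (f \<mu> has_derivative blinfun_apply (D x)) (at x)) \<and> continuous_on UNIV D \<and>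
      bounded (range (f \<mu>)) \<and> bounded (range D))"

definition C1b_norm :: "nat \<Rightarrow> (nat \<Rightarrow> 'a::real_normed_vector \<Rightarrow> 'a) \<Rightarrow> real" where
  "C1b_norm d f = Max ((\<lambda>\<mu>. max (SUP x. norm (f \<mu> x))
                                  (SUP x. onorm (frechet_derivative (f \<mu>) (at x)))) ` {1..d})"

definition zetaN :: "nat \<Rightarrow> real \<Rightarrow> real" where
  "zetaN N s = (\<Sum>j=1..N. real j powr (- s))"

definition CpN :: "real \<Rightarrow> nat \<Rightarrow> real" where
  "CpN p N = 2 powr (2 / p) * zetaN N (2 / p)"

end

theory Submission
  imports Defs
begin

(* The one-step increments Xi(a,b) = sum_mu f_mu(x_a) (w_b^mu - w_a^mu) have the defect
   Xi(a,b) + Xi(b,c) - Xi(a,c) = sum_mu (f_mu(x_b) - f_mu(x_a)) (w_c^mu - w_b^mu), of size at most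
   ||f|| |x_b - x_a| |w_c - w_b|. Removing partition points one at a time, always one whose two
   adjacent increments have the smallest product (Young's argument, the product being controlled by
   Cauchy-Schwarz and the p-variations), yields the discrete sewing bound
   |x_t - x_s - Xi(s,t)| <= ||f|| C_{p,N} ||x||_{p;[s,t]} ||w||_{p;[s,t]}.
   Together with the superadditivity of ||.||^p this gives ||x|| <= ||f|| ||w|| (1 + C ||x||), so
   ||x|| <= 2 ||f|| ||w|| on every interval with 2 C ||f|| ||w|| <= 1. A longer interval is cut
   greedily into a maximal such interval, one more step, and a remainder treated by induction; the
   pieces cost at most 2 (2 C ||f|| ||w||)^p / C each, and these costs add up because p >= 1 makes
   ||w||^p superadditive. *)

lemma powr_le_powr_imp_le: "0 < a \<Longrightarrow> 0 \<le> y \<Longrightarrow> x powr a \<le> y powr a \<Longrightarrow> x \<le> (y::real)"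
  by (meson not_le powr_less_mono2)

lemma powr_convex_combination_le:
  fixes u v l p :: real
  assumes "0 \<le> u" "0 \<le> v" "0 \<le> l" "l \<le> 1" "1 \<le> p"
  shows "(l * u + (1 - l) * v) powr p \<le> l * u powr p + (1 - l) * v powr p"
proof -
  have shrink: "(c * y) powr p \<le> c * y powr p" if "0 \<le> c" "c \<le> 1" "0 \<le> y" for c y :: real
  proof -
    have "c powr p \<le> c"
      using powr_le_one_le[of c p] that assms(5) by (cases "c = 0") auto
    then show ?thesis
      using that by (simp add: powr_mult mult_right_mono)
  qed
  consider "u = 0" | "v = 0" | "0 < u" "0 < v" using assms(1,2) by linarith
  then show ?thesis
  proof cases
    case 1
    then show ?thesis using shrink[of "1 - l" v] assms by simp
  next
    case 2
    then show ?thesis using shrink[of l u] assms by simp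
  next
    case 3
    then show ?thesis
      using convex_onD[OF powr_convex[OF assms(5)], of "1 - l" u v] assms by (simp add: algebra_simps)
  qed
qed

lemma powr_add_divide_le:
  fixes u v P Q p :: real
  assumes "0 \<le> u" "0 \<le> v" "0 < P" "0 < Q" "1 \<le> p"
  shows "((u + v) / (P + Q)) powr p \<le> P / (P + Q) * (u / P) powr p + Q / (P + Q) * (v / Q) powr p"
proof -
  have "1 - P / (P + Q) = Q / (P + Q)"
    using assms(3,4) by (simp add: field_simps)
  moreover have "(u + v) / (P + Q) = P / (P + Q) * (u / P) + Q / (P + Q) * (v / Q)"
    using assms(3,4) by (simp add: add_divide_distrib)
  ultimately show ?thesis
    using powr_convex_combination_le[of "u / P" "v / Q" "P / (P + Q)" p] assms by simp
qed

lemma minkowski_sum_powr: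
  fixes u v :: "'i \<Rightarrow> real"
  assumes "finite I" "1 \<le> p" "\<And>i. i \<in> I \<Longrightarrow> 0 \<le> u i" "\<And>i. i \<in> I \<Longrightarrow> 0 \<le> v i"
  shows "(\<Sum>i\<in>I. (u i + v i) powr p) powr (1 / p)
    \<le> (\<Sum>i\<in>I. u i powr p) powr (1 / p) + (\<Sum>i\<in>I. v i powr p) powr (1 / p)"
proof -
  define P Q where "P = (\<Sum>i\<in>I. u i powr p) powr (1 / p)" and "Q = (\<Sum>i\<in>I. v i powr p) powr (1 / p)"
  have P: "P powr p = (\<Sum>i\<in>I. u i powr p)" and Q: "Q powr p = (\<Sum>i\<in>I. v i powr p)"
    using assms(2) by (simp_all add: P_def Q_def powr_powr sum_nonneg)
  have vanish: "(\<Sum>i\<in>I. y i powr p) = 0 \<Longrightarrow> i \<in> I \<Longrightarrow> y i = 0" for y :: "'i \<Rightarrow> real" and i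
    using sum_nonneg_eq_0_iff[OF assms(1), of "\<lambda>i. y i powr p"] by simp
  consider "P = 0" | "Q = 0" | "0 < P" "0 < Q" using P_def Q_def by fastforce
  then show ?thesis
  proof cases
    case 1
    then have "u i = 0" if "i \<in> I" for i using vanish[of u] P that assms(2) by simp
    then show ?thesis by (simp add: 1 flip: P_def Q_def)
  next
    case 2
    then have "v i = 0" if "i \<in> I" for i using vanish[of v] Q that assms(2) by simp
    then show ?thesis by (simp add: 2 flip: P_def Q_def)
  next
    case 3
    have "(\<Sum>i\<in>I. (u i + v i) powr p) / (P + Q) powr p = (\<Sum>i\<in>I. ((u i + v i) / (P + Q)) powr p)"
      using 3 assms(3,4) by (simp add: sum_divide_distrib powr_divide)
    also have "\<dots> \<le> (\<Sum>i\<in>I. P / (P + Q) * (u i powr p / P powr p) + Q / (P + Q) * (v i powr p / Q powr p))"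
      using powr_add_divide_le 3 assms(2-4) by (intro sum_mono) (simp add: powr_divide)
    also have "\<dots> = P / (P + Q) * (P powr p / P powr p) + Q / (P + Q) * (Q powr p / Q powr p)"
      by (simp only: P Q sum.distrib sum_distrib_left sum_divide_distrib)
    also have "\<dots> = 1"
      using 3 by (simp add: add_divide_distrib[symmetric])
    finally have "(\<Sum>i\<in>I. (u i + v i) powr p) \<le> (P + Q) powr p"
      using 3 by (simp add: divide_le_eq)
    then have "(\<Sum>i\<in>I. (u i + v i) powr p) powr (1 / p) \<le> ((P + Q) powr p) powr (1 / p)"
      using assms(2) by (intro powr_mono2) (auto intro: sum_nonneg)
    then show ?thesis using 3 assms(2) by (simp add: powr_powr P_def Q_def)
  qed
qed

lemma minkowski3_powr:
  fixes a b c d p :: real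
  assumes "1 \<le> p" "0 \<le> a" "0 \<le> b" "0 \<le> c" "0 \<le> d"
  shows "(a + (b + c) powr p + d) powr (1 / p) \<le> (a + b powr p) powr (1 / p) + (c powr p + d) powr (1 / p)"
proof -
  have "(\<Sum>i<3. ([a powr (1 / p), b, 0] ! i + [0, c, d powr (1 / p)] ! i) powr p) powr (1 / p)
      \<le> (\<Sum>i<3. ([a powr (1 / p), b, 0] ! i) powr p) powr (1 / p)
        + (\<Sum>i<3. ([0, c, d powr (1 / p)] ! i) powr p) powr (1 / p)"
    using assms by (intro minkowski_sum_powr) (auto simp: less_Suc_eq numeral_3_eq_3)
  then show ?thesis
    using assms by (simp add: numeral_3_eq_3 powr_powr add.assoc)
qed

lemma add_le_four_powr_add:
  fixes r q p :: real
  assumes "1 < r" "0 \<le> q" "q \<le> 1" "1 \<le> p" "p \<le> 2"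
  shows "2 + r + 2 * q \<le> 4 * (r powr p + q powr p)"
proof -
  have "r \<le> r powr p"
    using powr_mono[OF assms(4), of r] assms(1) by simp
  moreover have "q\<^sup>2 \<le> q powr p"
    using powr_mono'[OF assms(5) assms(2,3)] assms(2) by (cases "q = 0") (simp_all add: powr_realpow)
  moreover have "2 * q \<le> 1 + 4 * q\<^sup>2"
    using sum_squares_ge_zero[of "2 * q - 1" 0] assms(2) by (simp add: power2_eq_square algebra_simps)
  ultimately show ?thesis using assms(1) by simp
qed

section \<open>Partitions and maximal partition sums\<close>

definition strict_partition :: "(nat \<Rightarrow> nat) \<Rightarrow> nat \<Rightarrow> nat \<Rightarrow> nat \<Rightarrow> bool" where
  "strict_partition \<sigma> m s t \<longleftrightarrow> \<sigma> 0 = s \<and> \<sigma> m = t \<and> (\<forall>j<m. \<sigma> j < \<sigma> (Suc j))"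

definition partition_sum :: "(nat \<Rightarrow> nat \<Rightarrow> real) \<Rightarrow> (nat \<Rightarrow> nat) \<Rightarrow> nat \<Rightarrow> real" where
  "partition_sum g \<sigma> m = (\<Sum>j<m. g (\<sigma> j) (\<sigma> (Suc j)))"

definition max_partition_sum :: "(nat \<Rightarrow> nat \<Rightarrow> real) \<Rightarrow> nat \<Rightarrow> nat \<Rightarrow> real" where
  "max_partition_sum g s t = Max ((\<lambda>P. consec_sum g (partition_points s t P)) ` Pow {s<..<t})"

lemma consec_sum_eq_sum_nth: "consec_sum g L = (\<Sum>j < length L - 1. g (L ! j) (L ! Suc j))"
proof (induction g L rule: consec_sum.induct)
  case (1 g a b rest)
  then show ?case
    by (simp add: sum.lessThan_Suc_shift del: sum.lessThan_Suc)
qed auto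

lemma strict_partition_less:
  assumes "strict_partition \<sigma> m s t" "i < j" "j \<le> m"
  shows "\<sigma> i < \<sigma> j"
  using assms(2,3)
proof (induction j)
  case (Suc j)
  then have "\<sigma> j < \<sigma> (Suc j)" using assms(1) by (simp add: strict_partition_def)
  with Suc show ?case by (cases "i = j") auto
qed simp

lemma strict_partition_le:
  "strict_partition \<sigma> m s t \<Longrightarrow> i \<le> j \<Longrightarrow> j \<le> m \<Longrightarrow> \<sigma> i \<le> \<sigma> j"
  using strict_partition_less[of \<sigma> m s t i j] by (cases "i = j") auto

lemma strict_partition_bounds:
  assumes "strict_partition \<sigma> m s t" "j \<le> m"
  shows "s \<le> \<sigma> j" "\<sigma> j \<le> t"
  using strict_partition_le[OF assms(1), of 0 j] strict_partition_le[OF assms(1), of j m] assms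
  by (auto simp: strict_partition_def)

lemma strict_partition_refl_iff: "strict_partition \<sigma> m s s \<longleftrightarrow> \<sigma> 0 = s \<and> m = 0"
  using strict_partition_less[of \<sigma> m s s 0 m] by (auto simp: strict_partition_def)

lemma strict_partition_single: "s < t \<Longrightarrow> strict_partition (\<lambda>j. if j = 0 then s else t) 1 s t"
  by (simp add: strict_partition_def)

lemma strict_partition_prefix:
  "strict_partition \<sigma> m s t \<Longrightarrow> j \<le> m \<Longrightarrow> strict_partition \<sigma> j s (\<sigma> j)"
  by (simp add: strict_partition_def)

lemma strict_partition_suffix:
  "strict_partition \<sigma> m s t \<Longrightarrow> j \<le> m \<Longrightarrow> strict_partition (\<lambda>i. \<sigma> (i + j)) (m - j) (\<sigma> j) t"
  by (simp add: strict_partition_def)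

lemma strict_partition_append:
  assumes "strict_partition \<sigma> m s u" "strict_partition \<tau> n u t"
  shows "strict_partition (\<lambda>j. if j \<le> m then \<sigma> j else \<tau> (j - m)) (m + n) s t"
  unfolding strict_partition_def
proof (intro conjI allI impI)
  fix j assume j: "j < m + n"
  consider "j < m" | "j = m" | "m < j" by linarith
  then show "(if j \<le> m then \<sigma> j else \<tau> (j - m)) < (if Suc j \<le> m then \<sigma> (Suc j) else \<tau> (Suc j - m))"
    by cases (use assms j in \<open>auto simp: strict_partition_def Suc_diff_le\<close>)
qed (use assms in \<open>auto simp: strict_partition_def\<close>)

lemma partition_sum_append:
  assumes "\<sigma> m = \<tau> 0"
  shows "partition_sum g (\<lambda>j. if j \<le> m then \<sigma> j else \<tau> (j - m)) (m + n)
    = partition_sum g \<sigma> m + partition_sum g \<tau> n"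
proof (induction n)
  case (Suc n)
  have "(if m + n \<le> m then \<sigma> (m + n) else \<tau> (m + n - m)) = \<tau> n"
    using assms by (cases n) auto
  with Suc show ?case by (simp add: partition_sum_def)
qed (simp add: partition_sum_def)

lemma partition_sum_split:
  "j \<le> m \<Longrightarrow> partition_sum g \<sigma> m = partition_sum g \<sigma> j + partition_sum g (\<lambda>i. \<sigma> (i + j)) (m - j)"
  unfolding partition_sum_def
  by (simp add: lessThan_atLeast0 sum.atLeastLessThan_concat[symmetric, of 0 j m]
      sum.atLeastLessThan_shift_0[of _ j m] add.commute)

lemma sorted_list_of_set_strict_sorted: "sorted_wrt (<) xs \<Longrightarrow> sorted_list_of_set (set xs) = xs"
  by (metis finite_set set_sorted_list_of_set strict_sorted_equal strict_sorted_list_of_set)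

lemma strict_partition_sorted_wrt:
  assumes "strict_partition \<sigma> m s t"
  shows "sorted_wrt (<) (map \<sigma> [0..<Suc m])"
  unfolding sorted_wrt_iff_nth_less using strict_partition_less[OF assms] by (auto simp del: upt_Suc)

lemma partition_points_strict_partition:
  assumes "strict_partition \<sigma> m s t"
  shows "partition_points s t (\<sigma> ` {0<..<m}) = map \<sigma> [0..<Suc m]"
proof -
  have "{0..m} = insert 0 (insert m {0<..<m})" by auto
  then have "insert s (insert t (\<sigma> ` {0<..<m})) = \<sigma> ` {0..m}"
    using assms by (simp add: strict_partition_def)
  then show ?thesis
    unfolding partition_points_def
    by (metis atLeastLessThanSuc_atLeastAtMost list.set_map set_upt sorted_list_of_set_strict_sorted
        strict_partition_sorted_wrt[OF assms])
qed

lemma partition_sum_le_max_partition_sum: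
  assumes "strict_partition \<sigma> m s t"
  shows "partition_sum g \<sigma> m \<le> max_partition_sum g s t"
proof -
  have "\<sigma> ` {0<..<m} \<in> Pow {s<..<t}"
    using strict_partition_less[OF assms] assms by (auto simp: strict_partition_def)
  moreover have "consec_sum g (partition_points s t (\<sigma> ` {0<..<m})) = partition_sum g \<sigma> m"
    by (simp add: partition_points_strict_partition[OF assms] consec_sum_eq_sum_nth partition_sum_def
        nth_append del: upt_Suc)
  ultimately show ?thesis
    unfolding max_partition_sum_def
    by (metis Max_ge finite_Pow_iff finite_greaterThanLessThan finite_imageI image_eqI)
qed

lemma strict_partition_nth:
  assumes sorted: "sorted_wrt (<) L" and "s \<in> set L" "t \<in> set L" and bounds: "set L \<subseteq> {s..t}"
  shows "strict_partition ((!) L) (length L - 1) s t"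
proof -
  define m where "m = length L - 1"
  have index: "i \<le> m \<longleftrightarrow> i < length L" for i
    using assms(2) unfolding m_def by (cases L) auto
  have mono: "L ! i \<le> L ! j" if "i \<le> j" "j \<le> m" for i j
    using sorted_nth_mono[of L i j] sorted that by (simp add: strict_sorted_iff index)
  have within: "L ! k \<in> {s..t}" if "k \<le> m" for k
    using subsetD[OF bounds nth_mem[of k L]] that index by blast
  obtain i j where "i \<le> m" "L ! i = s" "j \<le> m" "L ! j = t"
    using assms(2,3) by (auto simp: in_set_conv_nth index)
  with mono[of 0 i] mono[of j m] within[of 0] within[of m] have "L ! 0 = s" "L ! m = t"
    by auto
  moreover have "\<forall>j<m. L ! j < L ! Suc j"
    using sorted by (simp add: sorted_wrt_iff_nth_less m_def)
  ultimately show ?thesis by (simp add: strict_partition_def m_def)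
qed

lemma max_partition_sum_attained:
  assumes "s \<le> t"
  obtains \<sigma> m where "strict_partition \<sigma> m s t" "max_partition_sum g s t = partition_sum g \<sigma> m"
proof -
  let ?F = "\<lambda>P. consec_sum g (partition_points s t P)"
  have "max_partition_sum g s t \<in> ?F ` Pow {s<..<t}"
    unfolding max_partition_sum_def by (intro Max_in) auto
  then obtain P where P: "P \<subseteq> {s<..<t}" "max_partition_sum g s t = ?F P"
    by auto
  define L where "L = partition_points s t P"
  have "finite (insert s (insert t P))"
    using P(1) finite_subset by auto
  then have "sorted_wrt (<) L" "set L = insert s (insert t P)"
    unfolding L_def partition_points_def
    by (simp_all only: strict_sorted_list_of_set set_sorted_list_of_set)
  then have "strict_partition ((!) L) (length L - 1) s t"
    using P(1) assms by (intro strict_partition_nth) auto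
  moreover have "?F P = partition_sum g ((!) L) (length L - 1)"
    by (simp add: L_def[symmetric] consec_sum_eq_sum_nth partition_sum_def)
  ultimately show ?thesis using that P(2) by simp
qed

lemma max_partition_sum_refl: "max_partition_sum g s s = 0"
proof -
  obtain \<sigma> m where "strict_partition \<sigma> m s s" "max_partition_sum g s s = partition_sum g \<sigma> m"
    using max_partition_sum_attained[OF order_refl] .
  then show ?thesis by (simp add: strict_partition_refl_iff partition_sum_def)
qed

lemma max_partition_sum_nonneg:
  assumes "\<And>a b. g a b \<ge> 0" "s \<le> t"
  shows "max_partition_sum g s t \<ge> 0"
proof -
  obtain \<sigma> m where "strict_partition \<sigma> m s t" "max_partition_sum g s t = partition_sum g \<sigma> m"
    by (rule max_partition_sum_attained[OF assms(2)])
  moreover have "partition_sum g \<sigma> m \<ge> 0"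
    unfolding partition_sum_def by (intro sum_nonneg assms(1))
  ultimately show ?thesis by simp
qed

lemma single_le_max_partition_sum: "s < t \<Longrightarrow> g s t \<le> max_partition_sum g s t"
  using partition_sum_le_max_partition_sum[OF strict_partition_single] by (simp add: partition_sum_def)

lemma max_partition_sum_Suc: "max_partition_sum g s (Suc s) = g s (Suc s)"
proof -
  obtain \<sigma> m where \<sigma>: "strict_partition \<sigma> m s (Suc s)"
    and eq: "max_partition_sum g s (Suc s) = partition_sum g \<sigma> m"
    using max_partition_sum_attained[OF le_SucI[OF order_refl]] .
  have "m \<noteq> 0"
  proof
    assume "m = 0" with \<sigma> show False by (auto simp: strict_partition_def)
  qed
  moreover have "\<not> 2 \<le> m"
    using \<sigma> strict_partition_less[OF \<sigma>, of 0 1] strict_partition_less[OF \<sigma>, of 1 m]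
    by (auto simp: strict_partition_def)
  ultimately have "m = 1" by linarith
  with \<sigma> eq show ?thesis by (simp add: strict_partition_def partition_sum_def)
qed

lemma max_partition_sum_superadditive:
  assumes "s \<le> u" "u \<le> t"
  shows "max_partition_sum g s u + max_partition_sum g u t \<le> max_partition_sum g s t"
proof -
  obtain \<sigma> m where \<sigma>: "strict_partition \<sigma> m s u" "max_partition_sum g s u = partition_sum g \<sigma> m"
    using max_partition_sum_attained[OF assms(1)] by blast
  obtain \<tau> n where \<tau>: "strict_partition \<tau> n u t" "max_partition_sum g u t = partition_sum g \<tau> n"
    using max_partition_sum_attained[OF assms(2)] by blast
  have "\<sigma> m = \<tau> 0" using \<sigma> \<tau> by (simp add: strict_partition_def)
  then show ?thesis
    using partition_sum_le_max_partition_sum[OF strict_partition_append[OF \<sigma>(1) \<tau>(1)], of g]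
    by (simp add: partition_sum_append \<sigma>(2) \<tau>(2))
qed

lemma max_partition_sum_mono:
  assumes "\<And>a b. g a b \<ge> 0" "s \<le> a" "a \<le> b" "b \<le> t"
  shows "max_partition_sum g a b \<le> max_partition_sum g s t"
proof -
  have "max_partition_sum g s a + max_partition_sum g a b \<le> max_partition_sum g s b"
    "max_partition_sum g s b + max_partition_sum g b t \<le> max_partition_sum g s t"
    using max_partition_sum_superadditive assms(2-4) by (meson order_trans)+
  moreover have "max_partition_sum g s a \<ge> 0" "max_partition_sum g b t \<ge> 0"
    using max_partition_sum_nonneg[OF assms(1)] assms(2,4) by auto
  ultimately show ?thesis by linarith
qed

lemma partition_sum_max_partition_sum_le:
  "strict_partition \<sigma> m s t \<Longrightarrow> partition_sum (max_partition_sum g) \<sigma> m \<le> max_partition_sum g s t"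
proof (induction m arbitrary: t)
  case 0
  then show ?case by (auto simp: strict_partition_def partition_sum_def max_partition_sum_refl)
next
  case (Suc m)
  have \<sigma>: "strict_partition \<sigma> m s (\<sigma> m)"
    using strict_partition_prefix[OF Suc.prems] by simp
  have "partition_sum (max_partition_sum g) \<sigma> (Suc m)
      = partition_sum (max_partition_sum g) \<sigma> m + max_partition_sum g (\<sigma> m) t"
    using Suc.prems by (simp add: partition_sum_def strict_partition_def)
  also have "\<dots> \<le> max_partition_sum g s (\<sigma> m) + max_partition_sum g (\<sigma> m) t"
    using Suc.IH[OF \<sigma>] by simp
  also have "\<dots> \<le> max_partition_sum g s t"
    using strict_partition_bounds[OF Suc.prems, of m]
    by (intro max_partition_sum_superadditive) auto
  finally show ?case .
qed

lemma nat_crossing: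
  assumes "s \<le> t" "P s" "\<not> P t"
  obtains u where "s \<le> u" "u < t" "P u" "\<not> P (Suc u)"
proof -
  have "\<exists>u. s \<le> u \<and> u < t \<and> P u \<and> \<not> P (Suc u)"
    using assms
  proof (induction t rule: dec_induct)
    case (step n)
    then show ?case by (cases "P n") (auto intro: less_SucI)
  qed simp
  then show ?thesis using that by blast
qed

lemma strict_partition_locate:
  assumes "strict_partition \<sigma> m s t" "s \<le> u" "u < t"
  obtains j where "j < m" "\<sigma> j \<le> u" "u < \<sigma> (Suc j)"
proof -
  have "\<sigma> 0 \<le> u" "\<not> \<sigma> m \<le> u" using assms by (auto simp: strict_partition_def)
  then obtain j where "j < m" "\<sigma> j \<le> u" "\<not> \<sigma> (Suc j) \<le> u"
    using nat_crossing[of 0 m "\<lambda>j. \<sigma> j \<le> u"] by blast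
  then show ?thesis using that by simp
qed

lemma partition_sum_snoc_le:
  assumes "strict_partition \<sigma> j s v" "v \<le> u" "\<And>a. g a a = 0"
  shows "partition_sum g \<sigma> j + g v u \<le> max_partition_sum g s u"
proof (cases "v = u")
  case True
  then show ?thesis using partition_sum_le_max_partition_sum[OF assms(1)] assms(3) by simp
next
  case False
  have extended: "strict_partition (\<sigma>(Suc j := u)) (Suc j) s u"
    using assms(1,2) False by (auto simp: strict_partition_def less_Suc_eq)
  moreover have "partition_sum g (\<sigma>(Suc j := u)) (Suc j) = partition_sum g \<sigma> j + g v u"
    using assms(1) by (simp add: partition_sum_def strict_partition_def)
  ultimately show ?thesis using partition_sum_le_max_partition_sum[OF extended, of g] by linarith
qed

lemma partition_sum_cons_le:
  assumes "strict_partition \<tau> n v t" "u < v"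
  shows "g u v + partition_sum g \<tau> n \<le> max_partition_sum g u t"
proof -
  have extended: "strict_partition (\<lambda>j. if j = 0 then u else \<tau> (j - 1)) (Suc n) u t"
    using assms by (auto simp: strict_partition_def less_Suc_eq_0_disj)
  moreover have "partition_sum g (\<lambda>j. if j = 0 then u else \<tau> (j - 1)) (Suc n)
      = g u v + partition_sum g \<tau> n"
    using assms(1) by (simp add: partition_sum_def strict_partition_def sum.lessThan_Suc_shift
        del: sum.lessThan_Suc)
  ultimately show ?thesis using partition_sum_le_max_partition_sum[OF extended, of g] by linarith
qed

lemma strict_partition_split_at:
  assumes \<sigma>: "strict_partition \<sigma> m s t" and "s \<le> u" "u < t"
    and nonneg: "\<And>a b. 0 \<le> g a b" and refl: "\<And>a. g a a = 0"
  obtains j A B where "\<sigma> j \<le> u" "u < \<sigma> (Suc j)" "0 \<le> A" "0 \<le> B"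
    "partition_sum g \<sigma> m = A + g (\<sigma> j) (\<sigma> (Suc j)) + B"
    "A + g (\<sigma> j) u \<le> max_partition_sum g s u" "g u (\<sigma> (Suc j)) + B \<le> max_partition_sum g u t"
proof -
  obtain j where j: "j < m" "\<sigma> j \<le> u" "u < \<sigma> (Suc j)"
    using strict_partition_locate[OF \<sigma> assms(2,3)] by blast
  define A B where "A = partition_sum g \<sigma> j" and "B = partition_sum g (\<lambda>i. \<sigma> (i + Suc j)) (m - Suc j)"
  have "partition_sum g \<sigma> m = A + g (\<sigma> j) (\<sigma> (Suc j)) + B"
    using partition_sum_split[of "Suc j" m g \<sigma>] j(1) by (simp add: A_def B_def partition_sum_def)
  moreover have "A + g (\<sigma> j) u \<le> max_partition_sum g s u"
    using partition_sum_snoc_le[where g = g, OF strict_partition_prefix[OF \<sigma>] j(2) refl] j(1)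
    by (simp add: A_def)
  moreover have "g u (\<sigma> (Suc j)) + B \<le> max_partition_sum g u t"
    using partition_sum_cons_le[where g = g, OF strict_partition_suffix[OF \<sigma>, of "Suc j"] j(3)] j(1)
    by (simp add: B_def)
  moreover have "0 \<le> A" "0 \<le> B"
    unfolding A_def B_def partition_sum_def by (simp_all add: nonneg sum_nonneg)
  ultimately show ?thesis
    using that j(2,3) by blast
qed

section \<open>Discrete p-variation\<close>

lemma pvar_eq_max_partition_sum:
  "pvar p dst s t = max_partition_sum (\<lambda>a b. dst a b powr p) s t powr (1 / p)"
  unfolding pvar_def max_partition_sum_def ..

lemma pvar_nonneg: "pvar p dst s t \<ge> 0"
  by (simp add: pvar_eq_max_partition_sum)

lemma pvar_refl: "pvar p dst s s = 0"
  by (simp add: pvar_eq_max_partition_sum max_partition_sum_refl)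

lemma pvar_powr:
  assumes "p > 0" "s \<le> t"
  shows "pvar p dst s t powr p = max_partition_sum (\<lambda>a b. dst a b powr p) s t"
  using max_partition_sum_nonneg[OF _ assms(2), of "\<lambda>a b. dst a b powr p"] assms(1)
  by (simp add: pvar_eq_max_partition_sum powr_powr)

lemma pvar_Suc: "p > 0 \<Longrightarrow> dst s (Suc s) \<ge> 0 \<Longrightarrow> pvar p dst s (Suc s) = dst s (Suc s)"
  by (simp add: pvar_eq_max_partition_sum max_partition_sum_Suc powr_powr)

lemma dst_le_pvar:
  assumes "p > 0" "dst s t \<ge> 0" "s < t"
  shows "dst s t \<le> pvar p dst s t"
proof -
  have "dst s t = (dst s t powr p) powr (1 / p)"
    using assms(1,2) by (simp add: powr_powr)
  also have "\<dots> \<le> pvar p dst s t"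
    unfolding pvar_eq_max_partition_sum using single_le_max_partition_sum[OF assms(3)] assms(1)
    by (intro powr_mono2) auto
  finally show ?thesis .
qed

lemma pvar_mono:
  assumes "p > 0" "s \<le> a" "a \<le> b" "b \<le> t"
  shows "pvar p dst a b \<le> pvar p dst s t"
proof -
  let ?g = "\<lambda>a b. dst a b powr p"
  have "0 \<le> max_partition_sum ?g a b" "max_partition_sum ?g a b \<le> max_partition_sum ?g s t"
    using max_partition_sum_nonneg[of ?g a b] max_partition_sum_mono[of ?g s a b t] assms by auto
  then show ?thesis
    unfolding pvar_eq_max_partition_sum using assms(1) by (intro powr_mono2) auto
qed

lemma pvar_powr_superadditive:
  "p > 0 \<Longrightarrow> s \<le> u \<Longrightarrow> u \<le> t
    \<Longrightarrow> pvar p dst s u powr p + pvar p dst u t powr p \<le> pvar p dst s t powr p"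
  by (simp add: pvar_powr max_partition_sum_superadditive)

lemma pvar_le_scaled_pvar:
  assumes "p > 0" "K \<ge> 0" "s \<le> t" "\<And>a b. dst a b \<ge> 0"
    and bound: "\<And>a b. s \<le> a \<Longrightarrow> a < b \<Longrightarrow> b \<le> t \<Longrightarrow> dst a b \<le> K * pvar p dst' a b"
  shows "pvar p dst s t \<le> K * pvar p dst' s t"
proof -
  obtain \<sigma> m where \<sigma>: "strict_partition \<sigma> m s t"
    and opt: "pvar p dst s t powr p = partition_sum (\<lambda>a b. dst a b powr p) \<sigma> m"
    using max_partition_sum_attained[OF assms(3)] unfolding pvar_powr[OF assms(1,3)] .
  have "partition_sum (\<lambda>a b. dst a b powr p) \<sigma> m
      \<le> K powr p * partition_sum (max_partition_sum (\<lambda>a b. dst' a b powr p)) \<sigma> m"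
    unfolding partition_sum_def sum_distrib_left
  proof (intro sum_mono)
    fix j assume "j \<in> {..<m}"
    then have j: "s \<le> \<sigma> j" "\<sigma> j < \<sigma> (Suc j)" "\<sigma> (Suc j) \<le> t"
      using strict_partition_bounds[OF \<sigma>] \<sigma> by (auto simp: strict_partition_def)
    have "dst (\<sigma> j) (\<sigma> (Suc j)) powr p \<le> (K * pvar p dst' (\<sigma> j) (\<sigma> (Suc j))) powr p"
      using bound[OF j] assms(1,4) by (intro powr_mono2) auto
    also have "\<dots> = K powr p * max_partition_sum (\<lambda>a b. dst' a b powr p) (\<sigma> j) (\<sigma> (Suc j))"
      using assms(2) pvar_powr[OF assms(1) less_imp_le[OF \<open>\<sigma> j < \<sigma> (Suc j)\<close>], of dst']
      by (simp add: powr_mult pvar_nonneg)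
    finally show "dst (\<sigma> j) (\<sigma> (Suc j)) powr p
        \<le> K powr p * max_partition_sum (\<lambda>a b. dst' a b powr p) (\<sigma> j) (\<sigma> (Suc j))" .
  qed
  also have "\<dots> \<le> K powr p * max_partition_sum (\<lambda>a b. dst' a b powr p) s t"
    by (intro mult_left_mono partition_sum_max_partition_sum_le[OF \<sigma>]) simp
  also have "\<dots> = (K * pvar p dst' s t) powr p"
    using assms(2) pvar_powr[OF assms(1,3), of dst'] by (simp add: powr_mult pvar_nonneg)
  finally have "pvar p dst s t powr p \<le> (K * pvar p dst' s t) powr p"
    unfolding opt .
  then show ?thesis
    by (rule powr_le_powr_imp_le[OF assms(1), rotated]) (simp add: assms(2) pvar_nonneg)
qed

lemma pvar_triangle:
  assumes "1 \<le> p" and nonneg: "\<And>a b. 0 \<le> dst a b" and refl: "\<And>a. dst a a = 0"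
    and triangle: "\<And>a b c. dst a c \<le> dst a b + dst b c" and "s \<le> u" "u \<le> t"
  shows "pvar p dst s t \<le> pvar p dst s u + pvar p dst u t"
proof (cases "u = t")
  case True
  then show ?thesis by (simp add: pvar_refl)
next
  case False
  define g where "g = (\<lambda>a b. dst a b powr p)"
  have p: "0 < p" using assms(1) by simp
  have "s \<le> t" using assms(5,6) by simp
  obtain \<sigma> m where \<sigma>: "strict_partition \<sigma> m s t" and opt: "pvar p dst s t powr p = partition_sum g \<sigma> m"
    using max_partition_sum_attained[OF \<open>s \<le> t\<close>, of g] unfolding g_def pvar_powr[OF p \<open>s \<le> t\<close>] .
  obtain j A B where "\<sigma> j \<le> u" "u < \<sigma> (Suc j)" "0 \<le> A" "0 \<le> B"
    and split: "partition_sum g \<sigma> m = A + g (\<sigma> j) (\<sigma> (Suc j)) + B"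
    and left: "A + dst (\<sigma> j) u powr p \<le> pvar p dst s u powr p"
    and right: "dst u (\<sigma> (Suc j)) powr p + B \<le> pvar p dst u t powr p"
    using strict_partition_split_at[OF \<sigma> assms(5), of g] False assms(6) refl
    unfolding pvar_powr[OF p assms(5)] pvar_powr[OF p assms(6)] by (auto simp: g_def)
  have "g (\<sigma> j) (\<sigma> (Suc j)) \<le> (dst (\<sigma> j) u + dst u (\<sigma> (Suc j))) powr p"
    using triangle nonneg p unfolding g_def by (intro powr_mono2) auto
  with opt split have whole: "pvar p dst s t powr p \<le> A + (dst (\<sigma> j) u + dst u (\<sigma> (Suc j))) powr p + B"
    by simp
  have root: "(pvar p dst a b powr p) powr (1 / p) = pvar p dst a b" for a b
    using p by (simp add: powr_powr pvar_nonneg)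
  have "pvar p dst s t \<le> (A + (dst (\<sigma> j) u + dst u (\<sigma> (Suc j))) powr p + B) powr (1 / p)"
    using powr_mono2[OF _ _ whole, of "1 / p"] p by (simp add: root)
  also have "\<dots> \<le> (A + dst (\<sigma> j) u powr p) powr (1 / p) + (dst u (\<sigma> (Suc j)) powr p + B) powr (1 / p)"
    using \<open>0 \<le> A\<close> \<open>0 \<le> B\<close> nonneg by (intro minkowski3_powr[OF assms(1)])
  also have "\<dots> \<le> pvar p dst s u + pvar p dst u t"
    using powr_mono2[OF _ _ left, of "1 / p"] powr_mono2[OF _ _ right, of "1 / p"] \<open>0 \<le> A\<close> \<open>0 \<le> B\<close> p
    by (simp add: root add_mono)
  finally show ?thesis .
qed

section \<open>Young's sewing estimate\<close>

definition drop_point :: "(nat \<Rightarrow> nat) \<Rightarrow> nat \<Rightarrow> nat \<Rightarrow> nat" where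
  "drop_point \<sigma> k j = (if j < k then \<sigma> j else \<sigma> (Suc j))"

lemma strict_partition_drop_point:
  assumes "strict_partition \<sigma> (Suc m) s t" "i < m"
  shows "strict_partition (drop_point \<sigma> (Suc i)) m s t"
  unfolding strict_partition_def
proof (intro conjI allI impI)
  fix j assume "j < m"
  then show "drop_point \<sigma> (Suc i) j < drop_point \<sigma> (Suc i) (Suc j)"
    using strict_partition_less[OF assms(1), of j "Suc (Suc j)"] assms
    by (auto simp: drop_point_def strict_partition_def)
qed (use assms in \<open>auto simp: drop_point_def strict_partition_def\<close>)

lemma sum_drop_point:
  fixes h :: "nat \<Rightarrow> nat \<Rightarrow> 'b::ab_group_add"
  assumes "i < m"
  shows "(\<Sum>j<Suc m. h (\<sigma> j) (\<sigma> (Suc j)))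
    = (\<Sum>j<m. h (drop_point \<sigma> (Suc i) j) (drop_point \<sigma> (Suc i) (Suc j)))
      + (h (\<sigma> i) (\<sigma> (Suc i)) + h (\<sigma> (Suc i)) (\<sigma> (Suc (Suc i))) - h (\<sigma> i) (\<sigma> (Suc (Suc i))))"
  using assms
proof (induction m)
  case (Suc m)
  show ?case
  proof (cases "i = m")
    case True
    then show ?thesis by (simp add: drop_point_def algebra_simps)
  next
    case False
    with Suc have "i < m" by simp
    with Suc.IH show ?thesis by (simp add: drop_point_def algebra_simps)
  qed
qed simp

lemma sum_adjacent_products_powr_le:
  assumes \<sigma>: "strict_partition \<sigma> (Suc m) s t" and "0 < p"
    and nonneg: "\<And>a b. 0 \<le> \<alpha> a b" "\<And>a b. 0 \<le> \<beta> a b"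
  shows "(\<Sum>i<m. (\<alpha> (\<sigma> i) (\<sigma> (Suc i)) * \<beta> (\<sigma> (Suc i)) (\<sigma> (Suc (Suc i)))) powr (p / 2))
    \<le> (pvar p \<alpha> s t * pvar p \<beta> s t) powr (p / 2)"
proof -
  define a b where "a i = \<alpha> (\<sigma> i) (\<sigma> (Suc i))" and "b i = \<beta> (\<sigma> (Suc i)) (\<sigma> (Suc (Suc i)))" for i
  have "s \<le> t" using strict_partition_bounds[OF \<sigma>, of 0] by simp
  have "(\<Sum>i<m. a i powr p) \<le> partition_sum (\<lambda>a b. \<alpha> a b powr p) \<sigma> (Suc m)"
    by (simp add: a_def partition_sum_def)
  also have "\<dots> \<le> pvar p \<alpha> s t powr p"
    using partition_sum_le_max_partition_sum[OF \<sigma>] by (simp add: pvar_powr \<open>0 < p\<close> \<open>s \<le> t\<close>)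
  finally have sum_a: "(\<Sum>i<m. a i powr p) \<le> pvar p \<alpha> s t powr p" .
  have "(\<Sum>i<m. b i powr p) \<le> partition_sum (\<lambda>a b. \<beta> a b powr p) \<sigma> (Suc m)"
    by (simp add: b_def partition_sum_def sum.lessThan_Suc_shift del: sum.lessThan_Suc)
  also have "\<dots> \<le> pvar p \<beta> s t powr p"
    using partition_sum_le_max_partition_sum[OF \<sigma>] by (simp add: pvar_powr \<open>0 < p\<close> \<open>s \<le> t\<close>)
  finally have sum_b: "(\<Sum>i<m. b i powr p) \<le> pvar p \<beta> s t powr p" .
  have sq: "(y powr (p / 2))\<^sup>2 = y powr p" if "0 \<le> y" for y :: real
    by (simp add: power2_eq_square flip: powr_add)
  have "(\<Sum>i<m. (a i * b i) powr (p / 2))\<^sup>2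
      \<le> (\<Sum>i<m. (a i powr (p / 2))\<^sup>2) * (\<Sum>i<m. (b i powr (p / 2))\<^sup>2)"
    using Cauchy_Schwarz_ineq_sum[of "\<lambda>i. a i powr (p / 2)" "\<lambda>i. b i powr (p / 2)" "{..<m}"] nonneg
    by (simp add: a_def b_def powr_mult)
  also have "\<dots> \<le> pvar p \<alpha> s t powr p * pvar p \<beta> s t powr p"
    using sum_a sum_b nonneg by (simp add: sq a_def b_def mult_mono sum_nonneg)
  also have "\<dots> = ((pvar p \<alpha> s t * pvar p \<beta> s t) powr (p / 2))\<^sup>2"
    by (simp add: powr_mult pvar_nonneg power_mult_distrib sq)
  finally show ?thesis
    unfolding a_def b_def by (rule power2_le_imp_le) simp
qed

lemma exists_removable_point:
  assumes \<sigma>: "strict_partition \<sigma> (Suc m) s t" and "1 \<le> m" "0 < p"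
    and nonneg: "\<And>a b. 0 \<le> \<alpha> a b" "\<And>a b. 0 \<le> \<beta> a b"
  obtains i where "i < m"
    "\<alpha> (\<sigma> i) (\<sigma> (Suc i)) * \<beta> (\<sigma> (Suc i)) (\<sigma> (Suc (Suc i)))
      \<le> pvar p \<alpha> s t * pvar p \<beta> s t * real m powr (- (2 / p))"
proof -
  define V where "V = pvar p \<alpha> s t * pvar p \<beta> s t"
  define c where "c i = (\<alpha> (\<sigma> i) (\<sigma> (Suc i)) * \<beta> (\<sigma> (Suc i)) (\<sigma> (Suc (Suc i)))) powr (p / 2)" for i
  have "Min (c ` {..<m}) \<in> c ` {..<m}"
    using \<open>1 \<le> m\<close> by (intro Min_in) (auto simp: lessThan_empty_iff)
  then obtain i where i: "i < m" "c i = Min (c ` {..<m})"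
    by (metis imageE lessThan_iff)
  then have "real m * c i \<le> (\<Sum>i<m. c i)"
    using sum_bounded_below[of "{..<m}" "c i" c] by simp
  also have "\<dots> \<le> V powr (p / 2)"
    unfolding c_def V_def by (rule sum_adjacent_products_powr_le[OF \<sigma> \<open>0 < p\<close> nonneg])
  also have "\<dots> = real m * (V * real m powr (- (2 / p))) powr (p / 2)"
  proof -
    have "- (2 / p) * (p / 2) = -1" using \<open>0 < p\<close> by simp
    then show ?thesis
      using \<open>1 \<le> m\<close> by (simp add: V_def pvar_nonneg powr_mult powr_powr powr_neg_one)
  qed
  finally have "c i \<le> (V * real m powr (- (2 / p))) powr (p / 2)"
    using \<open>1 \<le> m\<close> by simp
  then have "\<alpha> (\<sigma> i) (\<sigma> (Suc i)) * \<beta> (\<sigma> (Suc i)) (\<sigma> (Suc (Suc i))) \<le> V * real m powr (- (2 / p))"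
    unfolding c_def
    by (rule powr_le_powr_imp_le[rotated 2]) (use \<open>0 < p\<close> in \<open>simp_all add: V_def pvar_nonneg\<close>)
  with i(1) that show ?thesis by (simp add: V_def)
qed

lemma exists_coarser_partition:
  fixes \<Xi> :: "nat \<Rightarrow> nat \<Rightarrow> 'b::real_normed_vector"
  assumes \<sigma>: "strict_partition \<sigma> (Suc m) s t" and "1 \<le> m" "0 < p" "0 \<le> K"
    and nonneg: "\<And>a b. 0 \<le> \<alpha> a b" "\<And>a b. 0 \<le> \<beta> a b"
    and defect: "\<And>a b c. norm (\<Xi> a b + \<Xi> b c - \<Xi> a c) \<le> K * \<alpha> a b * \<beta> b c"
  obtains \<tau> where "strict_partition \<tau> m s t"
    "norm ((\<Sum>j<Suc m. \<Xi> (\<sigma> j) (\<sigma> (Suc j))) - (\<Sum>j<m. \<Xi> (\<tau> j) (\<tau> (Suc j))))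
      \<le> K * pvar p \<alpha> s t * pvar p \<beta> s t * real m powr (- (2 / p))"
proof -
  obtain i where i: "i < m" and small:
    "\<alpha> (\<sigma> i) (\<sigma> (Suc i)) * \<beta> (\<sigma> (Suc i)) (\<sigma> (Suc (Suc i)))
      \<le> pvar p \<alpha> s t * pvar p \<beta> s t * real m powr (- (2 / p))"
    by (rule exists_removable_point[OF \<sigma> \<open>1 \<le> m\<close> \<open>0 < p\<close> nonneg])
  have "norm ((\<Sum>j<Suc m. \<Xi> (\<sigma> j) (\<sigma> (Suc j)))
      - (\<Sum>j<m. \<Xi> (drop_point \<sigma> (Suc i) j) (drop_point \<sigma> (Suc i) (Suc j))))
    = norm (\<Xi> (\<sigma> i) (\<sigma> (Suc i)) + \<Xi> (\<sigma> (Suc i)) (\<sigma> (Suc (Suc i))) - \<Xi> (\<sigma> i) (\<sigma> (Suc (Suc i))))"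
    unfolding sum_drop_point[OF i, of \<Xi> \<sigma>] by simp
  also have "\<dots> \<le> K * \<alpha> (\<sigma> i) (\<sigma> (Suc i)) * \<beta> (\<sigma> (Suc i)) (\<sigma> (Suc (Suc i)))"
    by (rule defect)
  also have "\<dots> \<le> K * pvar p \<alpha> s t * pvar p \<beta> s t * real m powr (- (2 / p))"
    using mult_left_mono[OF small \<open>0 \<le> K\<close>] by (simp add: mult.assoc)
  finally show ?thesis
    using that strict_partition_drop_point[OF \<sigma> i] by blast
qed

lemma sewing_estimate:
  fixes \<Xi> :: "nat \<Rightarrow> nat \<Rightarrow> 'b::real_normed_vector"
  assumes "strict_partition \<sigma> m s t" "1 \<le> m" "0 < p" "0 \<le> K"
    and nonneg: "\<And>a b. 0 \<le> \<alpha> a b" "\<And>a b. 0 \<le> \<beta> a b"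
    and defect: "\<And>a b c. norm (\<Xi> a b + \<Xi> b c - \<Xi> a c) \<le> K * \<alpha> a b * \<beta> b c"
  shows "norm ((\<Sum>j<m. \<Xi> (\<sigma> j) (\<sigma> (Suc j))) - \<Xi> s t)
    \<le> K * pvar p \<alpha> s t * pvar p \<beta> s t * (\<Sum>j=1..m-1. real j powr (- (2 / p)))"
  using assms(1,2)
proof (induction m arbitrary: \<sigma>)
  case (Suc m)
  let ?V = "K * pvar p \<alpha> s t * pvar p \<beta> s t"
  show ?case
  proof (cases "m = 0")
    case True
    then have "\<sigma> 0 = s" "\<sigma> (Suc 0) = t" using Suc.prems(1) by (simp_all add: strict_partition_def)
    with True show ?thesis by simp
  next
    case False
    then have "1 \<le> m" by simp
    obtain \<tau> where \<tau>: "strict_partition \<tau> m s t" and step: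
      "norm ((\<Sum>j<Suc m. \<Xi> (\<sigma> j) (\<sigma> (Suc j))) - (\<Sum>j<m. \<Xi> (\<tau> j) (\<tau> (Suc j))))
        \<le> ?V * real m powr (- (2 / p))"
      by (rule exists_coarser_partition[OF Suc.prems(1) \<open>1 \<le> m\<close> assms(3,4) nonneg defect])
    have "norm ((\<Sum>j<Suc m. \<Xi> (\<sigma> j) (\<sigma> (Suc j))) - \<Xi> s t)
        \<le> ?V * real m powr (- (2 / p)) + ?V * (\<Sum>j=1..m-1. real j powr (- (2 / p)))"
      by (rule norm_diff_triangle_le[OF step Suc.IH[OF \<tau> \<open>1 \<le> m\<close>]])
    also have "\<dots> = ?V * (\<Sum>j=1..Suc m-1. real j powr (- (2 / p)))"
      using False by (cases m) (simp_all add: distrib_left)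
    finally show ?thesis .
  qed
qed simp

section \<open>The Euler scheme\<close>

lemma C1b_norm_bounds:
  assumes "C1b_fields d f" "\<mu> \<in> {1..d}"
  shows "norm (f \<mu> y) \<le> C1b_norm d f" and "norm (f \<mu> a - f \<mu> b) \<le> C1b_norm d f * norm (a - b)"
proof -
  obtain D :: "'a \<Rightarrow> 'a \<Rightarrow>\<^sub>L 'a" where D: "\<And>x. (f \<mu> has_derivative blinfun_apply (D x)) (at x)"
    "bounded (range (f \<mu>))" "bounded (range D)"
    using assms unfolding C1b_fields_def by blast
  define S1 S2 where "S1 = (SUP x. norm (f \<mu> x))"
    and "S2 = (SUP x. onorm (frechet_derivative (f \<mu>) (at x)))"
  have "max S1 S2 \<le> C1b_norm d f"
    unfolding C1b_norm_def S1_def S2_def using assms(2) by (intro Max_ge) auto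
  then have S: "S1 \<le> C1b_norm d f" "S2 \<le> C1b_norm d f" by auto
  obtain B1 where B1: "\<And>y. norm (f \<mu> y) \<le> B1" using D(2) unfolding bounded_iff by auto
  obtain B2 where B2: "\<And>y. norm (D y) \<le> B2" using D(3) unfolding bounded_iff by auto
  have "norm (f \<mu> y) \<le> S1"
    unfolding S1_def by (rule cSUP_upper) (use B1 in \<open>auto intro!: bdd_aboveI2\<close>)
  with S show "norm (f \<mu> y) \<le> C1b_norm d f" by simp
  have deriv: "frechet_derivative (f \<mu>) (at y) = blinfun_apply (D y)" for y
    using frechet_derivative_at[OF D(1)] by simp
  have "onorm (blinfun_apply (D y)) \<le> S2" for y
    unfolding S2_def deriv
    by (rule cSUP_upper) (use B2 in \<open>auto intro!: bdd_aboveI2 simp: norm_blinfun.rep_eq[symmetric]\<close>)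
  then have "norm (f \<mu> a - f \<mu> b) \<le> S2 * norm (a - b)"
    using D(1) by (intro differentiable_bound[of UNIV "f \<mu>" "\<lambda>y. blinfun_apply (D y)"]) auto
  also have "\<dots> \<le> C1b_norm d f * norm (a - b)"
    using S by (intro mult_right_mono) auto
  finally show "norm (f \<mu> a - f \<mu> b) \<le> C1b_norm d f * norm (a - b)" .
qed

lemma C1b_norm_nonneg: "C1b_fields d f \<Longrightarrow> 1 \<le> d \<Longrightarrow> 0 \<le> C1b_norm d f"
  using order_trans[OF norm_ge_zero C1b_norm_bounds(1)[of d f 1]] by simp

lemma l1_dist_nonneg: "0 \<le> l1_dist d u v"
  unfolding l1_dist_def by (intro sum_nonneg) simp

lemma zetaN_nonneg: "0 \<le> zetaN N s"
  unfolding zetaN_def by (intro sum_nonneg) simp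

lemma zetaN_le_CpN: "0 < p \<Longrightarrow> zetaN N (2 / p) \<le> CpN p N"
  unfolding CpN_def using zetaN_nonneg[of N "2 / p"] by (simp add: mult_le_cancel_right1 ge_one_powr_ge_zero)

locale euler_scheme =
  fixes p :: real and N d :: nat
    and f :: "nat \<Rightarrow> 'a::real_normed_vector \<Rightarrow> 'a"
    and w :: "nat \<Rightarrow> nat \<Rightarrow> real"
    and x :: "nat \<Rightarrow> 'a"
  assumes p_ge_1: "1 \<le> p" and p_less_2: "p < 2" and d_pos: "1 \<le> d"
    and C1b: "C1b_fields d f"
    and x_Suc: "\<And>k. k < N \<Longrightarrow> x (Suc k) = x k + (\<Sum>\<mu>=1..d. (w (Suc k) \<mu> - w k \<mu>) *\<^sub>R f \<mu> (x k))"
begin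

abbreviation F :: real where "F \<equiv> C1b_norm d f"
abbreviation C :: real where "C \<equiv> CpN p N"
abbreviation X :: "nat \<Rightarrow> nat \<Rightarrow> real" where "X \<equiv> pvar p (\<lambda>a b. norm (x b - x a))"
abbreviation W :: "nat \<Rightarrow> nat \<Rightarrow> real" where "W \<equiv> pvar p (\<lambda>a b. l1_dist d (w a) (w b))"

definition \<Xi> :: "nat \<Rightarrow> nat \<Rightarrow> 'a" where
  "\<Xi> a b = (\<Sum>\<mu>=1..d. (w b \<mu> - w a \<mu>) *\<^sub>R f \<mu> (x a))"

lemma p_pos: "0 < p"
  using p_ge_1 by simp

lemma F_nonneg: "0 \<le> F"
  using C1b_norm_nonneg[OF C1b d_pos] .

lemma C_nonneg: "0 \<le> C"
  unfolding CpN_def using zetaN_nonneg by simp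

lemma norm_\<Xi>_le: "norm (\<Xi> a b) \<le> F * l1_dist d (w a) (w b)"
proof -
  have "norm (\<Xi> a b) \<le> (\<Sum>\<mu>=1..d. \<bar>w b \<mu> - w a \<mu>\<bar> * norm (f \<mu> (x a)))"
    unfolding \<Xi>_def by (rule order_trans[OF norm_sum]) simp
  also have "\<dots> \<le> (\<Sum>\<mu>=1..d. \<bar>w b \<mu> - w a \<mu>\<bar> * F)"
    using C1b_norm_bounds(1)[OF C1b] by (intro sum_mono mult_left_mono) auto
  finally show ?thesis
    by (simp add: l1_dist_def sum_distrib_left mult.commute)
qed

lemma norm_\<Xi>_defect_le:
  "norm (\<Xi> a b + \<Xi> b c - \<Xi> a c) \<le> F * norm (x b - x a) * l1_dist d (w b) (w c)"
proof -
  have "\<Xi> a b + \<Xi> b c - \<Xi> a c = (\<Sum>\<mu>=1..d. (w c \<mu> - w b \<mu>) *\<^sub>R (f \<mu> (x b) - f \<mu> (x a)))"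
    unfolding \<Xi>_def by (simp add: algebra_simps flip: sum.distrib sum_subtractf)
  also have "norm \<dots> \<le> (\<Sum>\<mu>=1..d. \<bar>w c \<mu> - w b \<mu>\<bar> * norm (f \<mu> (x b) - f \<mu> (x a)))"
    by (rule order_trans[OF norm_sum]) simp
  also have "\<dots> \<le> (\<Sum>\<mu>=1..d. \<bar>w c \<mu> - w b \<mu>\<bar> * (F * norm (x b - x a)))"
    using C1b_norm_bounds(2)[OF C1b] by (intro sum_mono mult_left_mono) auto
  finally show ?thesis
    by (simp add: l1_dist_def sum_distrib_left sum_distrib_right mult_ac)
qed

lemma x_diff_eq_sum_\<Xi>:
  "s \<le> t \<Longrightarrow> t \<le> N \<Longrightarrow> x t - x s = (\<Sum>j<t - s. \<Xi> (s + j) (s + Suc j))"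
proof (induction t rule: dec_induct)
  case (step t)
  then have "x (Suc t) - x s = (x t - x s) + \<Xi> t (Suc t)"
    using x_Suc[of t] by (simp add: \<Xi>_def)
  with step show ?case by (simp add: Suc_diff_le)
qed simp

lemma sewing_bound:
  assumes "s < t" "t \<le> N"
  shows "norm (x t - x s - \<Xi> s t) \<le> F * X s t * W s t * C"
proof -
  have "strict_partition (\<lambda>i. s + i) (t - s) s t"
    using assms(1) by (simp add: strict_partition_def)
  from sewing_estimate[where \<Xi> = \<Xi> and \<alpha> = "\<lambda>a b. norm (x b - x a)"
      and \<beta> = "\<lambda>a b. l1_dist d (w a) (w b)", OF this _ p_pos F_nonneg _ _ norm_\<Xi>_defect_le]
  have "norm (x t - x s - \<Xi> s t) \<le> F * X s t * W s t * (\<Sum>j=1..t-s-1. real j powr (- (2 / p)))"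
    using assms x_diff_eq_sum_\<Xi>[of s t] by (simp add: l1_dist_nonneg mult.assoc)
  also have "\<dots> \<le> F * X s t * W s t * zetaN N (2 / p)"
    unfolding zetaN_def using F_nonneg pvar_nonneg assms by (intro mult_left_mono sum_mono2) auto
  also have "\<dots> \<le> F * X s t * W s t * C"
    using F_nonneg pvar_nonneg zetaN_le_CpN[OF p_pos] by (intro mult_left_mono) auto
  finally show ?thesis .
qed

lemma norm_\<Xi>_le_W:
  assumes "a < b"
  shows "norm (\<Xi> a b) \<le> F * W a b"
proof -
  have "l1_dist d (w a) (w b) \<le> W a b"
    using dst_le_pvar[OF p_pos, of "\<lambda>a b. l1_dist d (w a) (w b)"] assms by (simp add: l1_dist_nonneg)
  then show ?thesis
    using norm_\<Xi>_le[of a b] mult_left_mono[OF _ F_nonneg] by (meson order_trans)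
qed

lemma X_Suc_le: "u < N \<Longrightarrow> X u (Suc u) \<le> F * W u (Suc u)"
  using x_Suc[of u] p_pos norm_\<Xi>_le_W[of u "Suc u"] by (simp add: pvar_Suc \<Xi>_def)

lemma X_triangle: "s \<le> u \<Longrightarrow> u \<le> t \<Longrightarrow> X s t \<le> X s u + X u t"
  by (rule pvar_triangle[OF p_ge_1])
    (use norm_triangle_ineq[of "x b - x a" "x c - x b" for a b c] in auto)

definition \<rho> :: "nat \<Rightarrow> nat \<Rightarrow> real" where
  "\<rho> a b = 2 * C * F * W a b"

lemma \<rho>_nonneg: "0 \<le> \<rho> a b"
  using C_nonneg F_nonneg pvar_nonneg by (simp add: \<rho>_def)

lemma \<rho>_powr_superadditive: "a \<le> b \<Longrightarrow> b \<le> c \<Longrightarrow> \<rho> a b powr p + \<rho> b c powr p \<le> \<rho> a c powr p"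
  using mult_left_mono[OF pvar_powr_superadditive[OF p_pos], of a b c "(2 * C * F) powr p"]
  by (simp add: \<rho>_def powr_mult C_nonneg F_nonneg pvar_nonneg distrib_left)

lemma X_le_small:
  assumes "s \<le> t" "t \<le> N" and small: "\<rho> s t \<le> 1"
  shows "X s t \<le> 2 * F * W s t"
proof -
  have pointwise: "norm (x b - x a) \<le> (F + F * C * X s t) * W a b"
    if "s \<le> a" "a < b" "b \<le> t" for a b
  proof -
    have "norm (x b - x a) \<le> norm (\<Xi> a b) + norm (x b - x a - \<Xi> a b)"
      using norm_triangle_ineq[of "\<Xi> a b" "x b - x a - \<Xi> a b"] by simp
    also have "\<dots> \<le> F * W a b + F * X a b * W a b * C"
      using norm_\<Xi>_le_W[of a b] sewing_bound[of a b] that assms(2) by (intro add_mono) auto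
    also have "\<dots> \<le> F * W a b + F * X s t * W a b * C"
      using pvar_mono[OF p_pos, of s a b t] that F_nonneg C_nonneg pvar_nonneg
      by (intro add_left_mono mult_right_mono mult_left_mono) auto
    finally show ?thesis by (simp add: algebra_simps)
  qed
  txt \<open>The constant in the pointwise bound involves \<open>X s t\<close> itself; smallness of \<open>\<rho> s t\<close>
    lets that term be absorbed.\<close>
  have "X s t \<le> (F + F * C * X s t) * W s t"
    by (rule pvar_le_scaled_pvar[OF p_pos _ assms(1) _ pointwise])
      (simp_all add: F_nonneg C_nonneg pvar_nonneg)
  also have "\<dots> = F * W s t + (C * F * W s t) * X s t"
    by (simp add: algebra_simps)
  also have "\<dots> \<le> F * W s t + (1 / 2) * X s t"
    using small pvar_nonneg by (intro add_left_mono mult_right_mono) (auto simp: \<rho>_def)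
  finally show ?thesis by simp
qed

lemma C_mult_X_le_\<rho>:
  assumes "a \<le> b" "b \<le> N" "\<rho> a b \<le> 1"
  shows "C * X a b \<le> \<rho> a b"
  using mult_left_mono[OF X_le_small[OF assms] C_nonneg] by (simp add: \<rho>_def mult_ac)

lemma C_mult_X_le_crossing:
  assumes "s \<le> u" "u < N" "\<rho> s u \<le> 1"
  shows "C * X s (Suc u) \<le> 1 + \<rho> s (Suc u) / 2"
proof -
  have "X u (Suc u) \<le> F * W u (Suc u)"
    using X_Suc_le assms(2) by simp
  also have "\<dots> \<le> F * W s (Suc u)"
    using pvar_mono[OF p_pos, of s u "Suc u" "Suc u"] assms(1) F_nonneg by (intro mult_left_mono) auto
  finally have "C * X u (Suc u) \<le> \<rho> s (Suc u) / 2"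
    using mult_left_mono[OF _ C_nonneg] by (simp add: \<rho>_def mult.assoc)
  moreover have "C * X s (Suc u) \<le> C * X s u + C * X u (Suc u)"
    using mult_left_mono[OF X_triangle[of s u "Suc u"] C_nonneg] assms(1) by (simp add: distrib_left)
  ultimately show ?thesis
    using C_mult_X_le_\<rho>[of s u] assms by simp
qed

lemma X_le_large:
  assumes "s < t" "t \<le> N" "1 < \<rho> s t"
  shows "C * X s t \<le> 2 * \<rho> s t powr p"
  using assms
proof (induction "t - s" arbitrary: s rule: less_induct)
  case less
  txt \<open>Cut at the last \<open>u\<close> with \<open>\<rho> s u \<le> 1\<close>; the rest \<open>[Suc u, t]\<close> is either small or
    handled by induction.\<close>
  obtain u where u: "s \<le> u" "u < t" "\<rho> s u \<le> 1" "\<not> \<rho> s (Suc u) \<le> 1"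
    by (rule nat_crossing[of s t "\<lambda>v. \<rho> s v \<le> 1"]) (use less.prems in \<open>simp_all add: \<rho>_def pvar_refl\<close>)
  then have head: "C * X s (Suc u) \<le> 1 + \<rho> s (Suc u) / 2" and "1 < \<rho> s (Suc u)"
    using C_mult_X_le_crossing[of s u] less.prems(2) by simp_all
  have "C * X s t \<le> C * X s (Suc u) + C * X (Suc u) t"
    using mult_left_mono[OF X_triangle[of s "Suc u" t] C_nonneg] u by (simp add: distrib_left)
  also have "\<dots> \<le> 2 * (\<rho> s (Suc u) powr p + \<rho> (Suc u) t powr p)"
  proof (cases "\<rho> (Suc u) t \<le> 1")
    case True
    then have "C * X (Suc u) t \<le> \<rho> (Suc u) t"
      using C_mult_X_le_\<rho>[of "Suc u" t] u less.prems(2) by simp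
    then show ?thesis
      using head add_le_four_powr_add[OF \<open>1 < \<rho> s (Suc u)\<close> \<rho>_nonneg True p_ge_1] p_less_2 by simp
  next
    case False
    then have "Suc u < t"
      using u(2) by (cases "Suc u = t") (auto simp: \<rho>_def pvar_refl)
    then have "C * X (Suc u) t \<le> 2 * \<rho> (Suc u) t powr p"
      using less.hyps[of "Suc u"] u(1) less.prems(2) False by simp
    then show ?thesis
      using head add_le_four_powr_add[OF \<open>1 < \<rho> s (Suc u)\<close> order_refl zero_le_one p_ge_1] p_less_2
      by simp
  qed
  also have "\<dots> \<le> 2 * \<rho> s t powr p"
    using \<rho>_powr_superadditive[of s "Suc u" t] u by simp
  finally show ?case .
qed

lemma X_le:
  assumes "s < t" "t \<le> N"
  shows "X s t \<le> 2 * max (2 powr p * C powr (p - 1) * F powr p * W s t powr p) (2 * F * W s t)"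
proof (cases "\<rho> s t \<le> 1")
  case True
  then have "X s t \<le> 2 * F * W s t"
    using X_le_small[of s t] assms by simp
  moreover have "0 \<le> F * W s t"
    using F_nonneg pvar_nonneg by simp
  ultimately show ?thesis
    using max.cobounded2[of "2 powr p * C powr (p - 1) * F powr p * W s t powr p" "2 * F * W s t"]
    by linarith
next
  case False
  then have "0 < C" using C_nonneg by (cases "C = 0") (auto simp: \<rho>_def)
  have "C * X s t \<le> 2 * \<rho> s t powr p"
    using X_le_large[OF assms] False by simp
  also have "\<dots> = C * (2 * (2 powr p * C powr (p - 1) * F powr p * W s t powr p))"
    using \<open>0 < C\<close> F_nonneg by (simp add: \<rho>_def powr_mult powr_diff pvar_nonneg)
  finally show ?thesis
    using \<open>0 < C\<close> by (simp add: mult_le_cancel_left_pos)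
qed

end

theorem theorem5p2:
  fixes p :: real and N d n :: nat
    and f :: "nat \<Rightarrow> 'a::real_normed_vector \<Rightarrow> 'a"
    and w :: "nat \<Rightarrow> nat \<Rightarrow> real"
    and x :: "nat \<Rightarrow> 'a" and \<xi> :: 'a
  assumes "1 \<le> p" and "p < 2"
    and "d \<ge> 1" and "n \<ge> 1"
    and "\<exists>B. finite B \<and> span B = (UNIV :: 'a set)" and "dim (UNIV :: 'a set) = n"
    and "C1b_fields d f"
    and "x 0 = \<xi>"
    and "\<And>k. k < N \<Longrightarrow> x (Suc k) = x k + (\<Sum>\<mu>=1..d. (w (Suc k) \<mu> - w k \<mu>) *\<^sub>R f \<mu> (x k))"
    and "k < l" and "l \<le> N"
  shows "pvar p (\<lambda>a b. norm (x b - x a)) k l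
     \<le> 2 * max (2 powr p * CpN p N powr (p - 1) * C1b_norm d f powr p
                   * pvar p (\<lambda>a b. l1_dist d (w a) (w b)) k l powr p)
               (2 * C1b_norm d f * pvar p (\<lambda>a b. l1_dist d (w a) (w b)) k l)"
proof -
  txt \<open>Neither the initial value \<open>\<xi>\<close> nor the finite dimension of the state space is needed.\<close>
  interpret euler_scheme p N d f w x
    by unfold_locales (use assms in auto)
  show ?thesis
    using X_le assms(10,11) by simp
qed

end
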